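(* Consider an instance of ESUP with $n$ clients, $m$ days, integer deadlines $d_{i,j}\ge 1$ and equity parameter $k\in\{0,\dots,m\}$. Let $d^*_j=\max_{1\le i\le n} d_{i,j}$. Build the undirected bipartite graph $G$ with vertex sets $V=\{v_{i,j}: 1\le i\le n, 1\le j\le m\}$, $U=\{u_{d,j}: 1\le j\le m, 1\le d\le d^*_j\}$ and $W=\{w_{i,\ell}: 1\le i\le n, 1\le \ell\le m-k\}$, where for each $i,j$ the vertex $v_{i,j}$ is adjacent exactly to $w_{i,1},\dots,w_{i,m-k}$ and to $u_{1,j},\dots,u_{d_{i,j},j}$ (there are no other edges). Then $G$ has a matching of size $nm$ if and only if there exist schedules $\sigma_1,\dots,\sigma_m$ under which no client is unsatisfied on more than $m-k$ days (i.e., a $k$-equitable set of schedules exists).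
   Context: Equitable Scheduling model: there are $n$ clients and $m$ days; on each day $j$ each client $i$ has one job with integer processing time $p_{i,j}$ and integer deadline $d_{i,j}$, to be processed non-preemptively on a single machine. A schedule for day $j$ is a permutation $\sigma_j$ of $\{1,\dots,n\}$; the completion time of client $i$'s job on day $j$ is $C_{i,j}=\sum_{i_0:\sigma_j(i_0)\le\sigma_j(i)}p_{i_0,j}$. Client $i$ is satisfied on day $j$ if $C_{i,j}\le d_{i,j}$, otherwise unsatisfied. Given $k\in\{0,\dots,m\}$, a set of schedules $\{\sigma_1,\dots,\sigma_m\}$ is $k$-equitable if every client is satisfied on at least $k$ days. ESUP (Equitable Scheduling with Unit Processing Times) is the problem of deciding whether a $k$-equitable set of schedules exists when $p_{i,j}=1$ for all $i,j$ (so $C_{i,j}=\sigma_j(i)$). *)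

theory Defs
  imports Main
begin

definition is_schedule :: "nat \<Rightarrow> (nat \<Rightarrow> nat) \<Rightarrow> bool" where
  "is_schedule n s \<longleftrightarrow> bij_betw s {1..n} {1..n}"

definition completion_time ::
  "nat \<Rightarrow> (nat \<Rightarrow> nat \<Rightarrow> int) \<Rightarrow> (nat \<Rightarrow> nat \<Rightarrow> nat) \<Rightarrow> nat \<Rightarrow> nat \<Rightarrow> int" where
  "completion_time n p sigma i j = (\<Sum>i0\<in>{i0\<in>{1..n}. sigma j i0 \<le> sigma j i}. p i0 j)"

definition satisfied ::
  "nat \<Rightarrow> (nat \<Rightarrow> nat \<Rightarrow> int) \<Rightarrow> (nat \<Rightarrow> nat \<Rightarrow> int) \<Rightarrow> (nat \<Rightarrow> nat \<Rightarrow> nat) \<Rightarrow> nat \<Rightarrow> nat \<Rightarrow> bool" where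
  "satisfied n p d sigma i j \<longleftrightarrow> completion_time n p sigma i j \<le> d i j"

definition k_equitable ::
  "nat \<Rightarrow> nat \<Rightarrow> (nat \<Rightarrow> nat \<Rightarrow> int) \<Rightarrow> (nat \<Rightarrow> nat \<Rightarrow> int) \<Rightarrow> nat \<Rightarrow> (nat \<Rightarrow> nat \<Rightarrow> nat) \<Rightarrow> bool" where
  "k_equitable n m p d k sigma \<longleftrightarrow>
     (\<forall>j\<in>{1..m}. is_schedule n (sigma j)) \<and>
     (\<forall>i\<in>{1..n}. card {j\<in>{1..m}. satisfied n p d sigma i j} \<ge> k)"

definition unit_times :: "nat \<Rightarrow> nat \<Rightarrow> int" where
  "unit_times i j = 1"

datatype vert = V nat nat | U int nat | W nat nat

definition dstar :: "nat \<Rightarrow> (nat \<Rightarrow> nat \<Rightarrow> int) \<Rightarrow> nat \<Rightarrow> int" where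
  "dstar n d j = Max {d i j | i. i \<in> {1..n}}"

definition esup_vertices :: "nat \<Rightarrow> nat \<Rightarrow> nat \<Rightarrow> (nat \<Rightarrow> nat \<Rightarrow> int) \<Rightarrow> vert set" where
  "esup_vertices n m k d =
     {V i j | i j. i \<in> {1..n} \<and> j \<in> {1..m}} \<union>
     {U dd j | dd j. j \<in> {1..m} \<and> 1 \<le> dd \<and> dd \<le> dstar n d j} \<union>
     {W i l | i l. i \<in> {1..n} \<and> l \<in> {1..m - k}}"

definition esup_edges :: "nat \<Rightarrow> nat \<Rightarrow> nat \<Rightarrow> (nat \<Rightarrow> nat \<Rightarrow> int) \<Rightarrow> vert set set" where
  "esup_edges n m k d =
     {{V i j, W i l} | i j l. i \<in> {1..n} \<and> j \<in> {1..m} \<and> l \<in> {1..m - k}} \<union>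
     {{V i j, U dd j} | i j dd. i \<in> {1..n} \<and> j \<in> {1..m} \<and> 1 \<le> dd \<and> dd \<le> d i j}"

definition is_matching :: "'a set set \<Rightarrow> 'a set set \<Rightarrow> bool" where
  "is_matching E M \<longleftrightarrow> M \<subseteq> E \<and> (\<forall>e\<in>M. \<forall>e'\<in>M. e \<noteq> e' \<longrightarrow> e \<inter> e' = {})"

end

theory Submission
  imports Defs
begin

text \<open>A matching of size nm saturates every job vertex v_{i,j}. A job matched to
  u_{dd,j} receives a slot dd no later than its deadline, and on each day these slots
  are distinct, so ordering the slotted jobs by slot yields a permutation placing each of
  them no later than its slot. A job matched to some w_{i,l} may be late; client i has
  only m - k such vertices, so it is late on at most m - k days. Conversely, a
  k-equitable schedule matches every on-time job to the slot given by its position and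
  enumerates the at most m - k late days of each client into its w-vertices.\<close>

lemma inj_on_extend_to_permutation:
  assumes "finite A" "S \<subseteq> A" "inj_on g S" "g ` S \<subseteq> A"
  obtains s where "bij_betw s A A" "\<And>x. x \<in> S \<Longrightarrow> s x = g x"
proof -
  have "card (A - S) = card (A - g ` S)"
    using assms by (simp add: card_Diff_subset card_image finite_subset)
  then obtain h where h: "bij_betw h (A - S) (A - g ` S)"
    using finite_same_card_bij assms(1) by blast
  define s where "s x = (if x \<in> S then g x else h x)" for x
  have "bij_betw s S (g ` S)"
    using assms(3) by (simp add: bij_betw_def inj_on_def s_def image_def)
  moreover have "bij_betw s (A - S) (A - g ` S)"
    using h by (rule bij_betw_cong[THEN iffD1, rotated]) (simp add: s_def)
  ultimately have "bij_betw s (S \<union> (A - S)) (g ` S \<union> (A - g ` S))"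
    by (rule bij_betw_combine) blast
  then have "bij_betw s A A"
    using assms(2,4) by (simp add: Un_absorb1 Un_Diff_cancel)
  then show thesis using that s_def by simp
qed

lemma rank_inj_on:
  fixes f :: "'a \<Rightarrow> 'b::linorder"
  assumes "finite S" "inj_on f S"
  shows "inj_on (\<lambda>x. card {y\<in>S. f y \<le> f x}) S"
proof (rule inj_onI)
  have strict: "card {y\<in>S. f y \<le> f x} < card {y\<in>S. f y \<le> f x'}"
    if "x' \<in> S" "f x < f x'" for x x'
  proof (rule psubset_card_mono)
    have "x' \<in> {y\<in>S. f y \<le> f x'} - {y\<in>S. f y \<le> f x}"
      using that by simp
    then show "{y\<in>S. f y \<le> f x} \<subset> {y\<in>S. f y \<le> f x'}"
      using that by auto
  qed (use assms(1) in simp)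
  fix x x' assume x: "x \<in> S" "x' \<in> S"
    and eq: "card {y\<in>S. f y \<le> f x} = card {y\<in>S. f y \<le> f x'}"
  show "x = x'"
  proof (rule ccontr)
    assume "x \<noteq> x'"
    then have "f x \<noteq> f x'"
      using x assms(2) by (simp add: inj_on_eq_iff)
    then have "f x < f x' \<or> f x' < f x"
      by (rule linorder_neqE) simp_all
    then show False
      using strict[of x' x] strict[of x x'] x eq by auto
  qed
qed

lemma rank_le_value:
  fixes f :: "'a \<Rightarrow> int"
  assumes "inj_on f S" "\<forall>y\<in>S. 1 \<le> f y" "x \<in> S"
  shows "int (card {y\<in>S. f y \<le> f x}) \<le> f x"
proof -
  have "card {y\<in>S. f y \<le> f x} = card (f ` {y\<in>S. f y \<le> f x})"
    using assms(1) by (simp add: card_image inj_on_subset)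
  also have "\<dots> \<le> card {1..f x}"
    using assms(2) by (intro card_mono) auto
  finally show ?thesis using assms(2,3) by auto
qed

lemma exists_permutation_below_injective_bound:
  fixes f :: "nat \<Rightarrow> int"
  assumes "S \<subseteq> {1..n}" "inj_on f S" "\<forall>i\<in>S. 1 \<le> f i"
  obtains s where "bij_betw s {1..n} {1..n}" "\<forall>i\<in>S. int (s i) \<le> f i"
proof -
  define r where "r i = card {i'\<in>S. f i' \<le> f i}" for i
  have fin: "finite S" using assms(1) finite_subset by blast
  have "r i \<in> {1..n}" if "i \<in> S" for i
  proof -
    have "0 < r i" using fin that by (auto simp: r_def card_gt_0_iff)
    moreover have "r i \<le> card S" using fin by (auto simp: r_def intro: card_mono)
    moreover have "card S \<le> n" using card_mono[OF _ assms(1)] by simp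
    ultimately show ?thesis by simp
  qed
  then obtain s where "bij_betw s {1..n} {1..n}" "\<And>i. i \<in> S \<Longrightarrow> s i = r i"
    using inj_on_extend_to_permutation[of "{1..n}" S r] rank_inj_on[OF fin assms(2)] assms(1)
    unfolding r_def by blast
  then show thesis
    using that rank_le_value[OF assms(2,3)] by (simp add: r_def)
qed

lemma card_permutation_le_value:
  assumes "bij_betw s {1..n} {1..n}" "i \<in> {1..n}"
  shows "card {x\<in>{1..n}. s x \<le> s i} = s i"
proof -
  have "s ` {x\<in>{1..n}. s x \<le> s i} = {y\<in>s ` {1..n}. y \<le> s i}"
    by auto
  also have "\<dots> = {1..s i}"
    using assms bij_betw_apply[OF assms] by (auto simp: bij_betw_def)
  finally have "s ` {x\<in>{1..n}. s x \<le> s i} = {1..s i}" .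
  then have "bij_betw s {x\<in>{1..n}. s x \<le> s i} {1..s i}"
    by (intro bij_betw_subset[OF assms(1)]) auto
  then show ?thesis by (simp add: bij_betw_same_card)
qed

lemma satisfied_unit_times_iff:
  assumes "bij_betw (sigma j) {1..n} {1..n}" "i \<in> {1..n}"
  shows "satisfied n unit_times d sigma i j \<longleftrightarrow> int (sigma j i) \<le> d i j"
  using card_permutation_le_value[OF assms]
  by (simp add: satisfied_def completion_time_def unit_times_def)

lemma card_filter_ge_iff_card_filter_not_le:
  assumes "k \<le> m"
  shows "k \<le> card {j\<in>{1..m}. P j} \<longleftrightarrow> card {j\<in>{1..m}. \<not> P j} \<le> m - k"
proof -
  have "card {j\<in>{1..m}. P j} + card {j\<in>{1..m}. \<not> P j}
      = card ({j\<in>{1..m}. P j} \<union> {j\<in>{1..m}. \<not> P j})"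
    by (rule card_Un_disjoint[symmetric]) auto
  also have "{j\<in>{1..m}. P j} \<union> {j\<in>{1..m}. \<not> P j} = {1..m}" by blast
  finally have "card {j\<in>{1..m}. P j} + card {j\<in>{1..m}. \<not> P j} = m" by simp
  then show ?thesis using assms by linarith
qed

lemma finite_inj_on_into_atLeastAtMost:
  assumes "finite A" "card A \<le> c"
  obtains t :: "'a \<Rightarrow> nat" where "inj_on t A" "t ` A \<subseteq> {1..c}"
proof -
  obtain h where h: "bij_betw h A {0..<card A}"
    using ex_bij_betw_finite_nat[OF assms(1)] by blast
  show thesis
  proof
    show "inj_on (Suc \<circ> h) A" using h by (simp add: bij_betw_def comp_inj_on)
    show "(Suc \<circ> h) ` A \<subseteq> {1..c}"
    proof clarify
      fix x assume "x \<in> A"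
      then have "h x < card A" using bij_betw_apply[OF h] by auto
      then show "(Suc \<circ> h) x \<in> {1..c}" using assms(2) by simp
    qed
  qed
qed

lemma is_matching_image_of_pairs:
  assumes "inj_on a A" "inj_on b A" "a ` A \<inter> b ` A = {}" "\<forall>x\<in>A. {a x, b x} \<in> E"
  shows "is_matching E ((\<lambda>x. {a x, b x}) ` A)" "card ((\<lambda>x. {a x, b x}) ` A) = card A"
proof -
  have disjoint: "{a x, b x} \<inter> {a y, b y} = {}" if "x \<in> A" "y \<in> A" "x \<noteq> y" for x y
    using that assms(1-3) by (auto simp: inj_on_eq_iff)
  then show "is_matching E ((\<lambda>x. {a x, b x}) ` A)"
    using assms(4) by (auto simp: is_matching_def)
  have "inj_on (\<lambda>x. {a x, b x}) A"
    using disjoint by (intro inj_onI) blast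
  then show "card ((\<lambda>x. {a x, b x}) ` A) = card A"
    by (rule card_image)
qed

lemma matching_partner_of_saturated_side:
  assumes "is_matching E M" "finite X" "card X \<le> card M"
    and "\<forall>e\<in>E. \<exists>x\<in>X. \<exists>y. y \<notin> X \<and> e = {x, y}"
  obtains p where "inj_on p X" "\<forall>x\<in>X. {x, p x} \<in> M \<and> p x \<notin> X"
proof -
  have sub: "M \<subseteq> E" and disj: "\<And>e e'. e \<in> M \<Longrightarrow> e' \<in> M \<Longrightarrow> e \<noteq> e' \<Longrightarrow> e \<inter> e' = {}"
    using assms(1) by (auto simp: is_matching_def)
  define p where "p x = (SOME y. {x, y} \<in> M \<and> y \<notin> X)" for x
  define C where "C = {x\<in>X. \<exists>y. {x, y} \<in> M \<and> y \<notin> X}"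
  have p: "{x, p x} \<in> M \<and> p x \<notin> X" if x: "x \<in> C" for x
  proof -
    obtain y where "{x, y} \<in> M \<and> y \<notin> X" using x by (auto simp: C_def)
    then show ?thesis unfolding p_def by (rule someI)
  qed
  have unique: "y = p x" if "x \<in> X" "{x, y} \<in> M" "y \<notin> X" for x y
  proof -
    have "x \<in> C" using that by (auto simp: C_def)
    then show ?thesis
      using disj[OF that(2) conjunct1[OF p]] that p by (auto simp: doubleton_eq_iff)
  qed
  have "finite C" using assms(2) by (simp add: C_def)
  have "M \<subseteq> (\<lambda>x. {x, p x}) ` C"
  proof
    fix e assume "e \<in> M"
    then obtain x y where "x \<in> X" "y \<notin> X" "e = {x, y}" using sub assms(4) by blast
    then show "e \<in> (\<lambda>x. {x, p x}) ` C"
      using \<open>e \<in> M\<close> unique by (auto simp: C_def)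
  qed
  then have "card M \<le> card ((\<lambda>x. {x, p x}) ` C)"
    using \<open>finite C\<close> by (intro card_mono) auto
  also have "\<dots> \<le> card C" by (rule card_image_le[OF \<open>finite C\<close>])
  finally have "card X \<le> card C" using assms(3) by linarith
  moreover have "card C \<le> card X"
    using assms(2) by (intro card_mono) (auto simp: C_def)
  ultimately have CX: "C = X"
    using assms(2) by (intro card_subset_eq) (auto simp: C_def)
  have "inj_on p X"
  proof (rule inj_onI)
    fix x x' assume x: "x \<in> X" "x' \<in> X" "p x = p x'"
    then have "{x, p x} \<in> M" "{x', p x'} \<in> M" "p x \<notin> X"
      using p[of x] p[of x'] x(1,2) unfolding CX by auto
    then show "x = x'"
      using disj[of "{x, p x}" "{x', p x'}"] x by auto
  qed
  then show thesis using that p CX by blast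
qed

definition esup_jobs :: "nat \<Rightarrow> nat \<Rightarrow> vert set" where
  "esup_jobs n m = (\<lambda>(i, j). V i j) ` ({1..n} \<times> {1..m})"

lemma card_esup_jobs: "card (esup_jobs n m) = n * m"
  unfolding esup_jobs_def by (subst card_image) (auto simp: inj_on_def card_cartesian_product)

lemma esup_edge_iff:
  "{V i j, x} \<in> esup_edges n m k d \<longleftrightarrow> i \<in> {1..n} \<and> j \<in> {1..m} \<and>
     ((\<exists>l\<in>{1..m - k}. x = W i l) \<or> (\<exists>dd. 1 \<le> dd \<and> dd \<le> d i j \<and> x = U dd j))"
  unfolding esup_edges_def by (auto simp: doubleton_eq_iff)

lemma esup_edges_job_side:
  "\<forall>e\<in>esup_edges n m k d. \<exists>x\<in>esup_jobs n m. \<exists>y. y \<notin> esup_jobs n m \<and> e = {x, y}"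
proof
  fix e assume "e \<in> esup_edges n m k d"
  then obtain i j y where "e = {V i j, y}" "i \<in> {1..n}" "j \<in> {1..m}" "\<forall>a b. y \<noteq> V a b"
    unfolding esup_edges_def by blast
  then show "\<exists>x\<in>esup_jobs n m. \<exists>y. y \<notin> esup_jobs n m \<and> e = {x, y}"
    unfolding esup_jobs_def by (intro bexI[of _ "V i j"] exI[of _ y]) auto
qed

lemma card_unslotted_days_le:
  assumes edge: "\<forall>i\<in>{1..n}. \<forall>j\<in>{1..m}. {V i j, q i j} \<in> esup_edges n m k d"
    and inj: "inj_on (\<lambda>(i, j). q i j) ({1..n} \<times> {1..m})" and i: "i \<in> {1..n}"
  shows "card {j\<in>{1..m}. \<nexists>dd. q i j = U dd j} \<le> m - k"
proof -
  have "card {j\<in>{1..m}. \<nexists>dd. q i j = U dd j} \<le> card (W i ` {1..m - k})"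
  proof (rule card_inj_on_le)
    show "inj_on (q i) {j\<in>{1..m}. \<nexists>dd. q i j = U dd j}"
    proof (rule inj_onI)
      fix j j' assume "j \<in> {j\<in>{1..m}. \<nexists>dd. q i j = U dd j}"
        "j' \<in> {j\<in>{1..m}. \<nexists>dd. q i j = U dd j}" "q i j = q i j'"
      then show "j = j'" using inj_onD[OF inj, of "(i, j)" "(i, j')"] i by simp
    qed
    show "q i ` {j\<in>{1..m}. \<nexists>dd. q i j = U dd j} \<subseteq> W i ` {1..m - k}"
    proof clarify
      fix j assume j: "j \<in> {1..m}" "\<nexists>dd. q i j = U dd j"
      then show "q i j \<in> W i ` {1..m - k}"
        using edge[rule_format, OF i j(1)] unfolding esup_edge_iff by auto
    qed
  qed simp
  also have "\<dots> \<le> m - k"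
    using card_image_le[of "{1..m - k}" "W i"] by simp
  finally show ?thesis .
qed

lemma exists_schedule_within_slots:
  assumes edge: "\<forall>i\<in>{1..n}. \<forall>j\<in>{1..m}. {V i j, q i j} \<in> esup_edges n m k d"
    and inj: "inj_on (\<lambda>(i, j). q i j) ({1..n} \<times> {1..m})" and j: "j \<in> {1..m}"
  shows "\<exists>s. bij_betw s {1..n} {1..n} \<and>
    (\<forall>i\<in>{1..n}. \<forall>dd. q i j = U dd j \<longrightarrow> int (s i) \<le> dd)"
proof -
  define slot where "slot i = (case q i j of U dd _ \<Rightarrow> dd | _ \<Rightarrow> 0)" for i
  define S where "S = {i\<in>{1..n}. \<exists>dd. q i j = U dd j}"
  have slot: "q i j = U (slot i) j \<and> 1 \<le> slot i" if "i \<in> S" for i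
    using that edge[rule_format, of i j] j unfolding S_def esup_edge_iff slot_def by auto
  have "S \<subseteq> {1..n}" by (auto simp: S_def)
  moreover have "inj_on slot S"
  proof (rule inj_onI)
    fix i i' assume ii': "i \<in> S" "i' \<in> S" "slot i = slot i'"
    then have "q i j = q i' j" using slot[of i] slot[of i'] by simp
    then show "i = i'"
      using inj_onD[OF inj, of "(i, j)" "(i', j)"] ii' j by (simp add: S_def)
  qed
  moreover have "\<forall>i\<in>S. 1 \<le> slot i" using slot by blast
  ultimately obtain s where s: "bij_betw s {1..n} {1..n}" "\<forall>i\<in>S. int (s i) \<le> slot i"
    by (rule exists_permutation_below_injective_bound)
  have "\<forall>i\<in>{1..n}. \<forall>dd. q i j = U dd j \<longrightarrow> int (s i) \<le> dd"
  proof (intro ballI allI impI)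
    fix i dd assume "i \<in> {1..n}" "q i j = U dd j"
    then have "i \<in> S" "slot i = dd" by (auto simp: S_def slot_def)
    then show "int (s i) \<le> dd" using s(2) by blast
  qed
  then show ?thesis using s(1) by blast
qed

lemma k_equitable_of_esup_partners:
  assumes "k \<le> m"
    and edge: "\<forall>i\<in>{1..n}. \<forall>j\<in>{1..m}. {V i j, q i j} \<in> esup_edges n m k d"
    and inj: "inj_on (\<lambda>(i, j). q i j) ({1..n} \<times> {1..m})"
  shows "\<exists>sigma. k_equitable n m unit_times d k sigma"
proof -
  obtain sigma where sigma: "\<And>j. j \<in> {1..m} \<Longrightarrow> bij_betw (sigma j) {1..n} {1..n} \<and>
      (\<forall>i\<in>{1..n}. \<forall>dd. q i j = U dd j \<longrightarrow> int (sigma j i) \<le> dd)"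
    using exists_schedule_within_slots[OF edge inj] by metis
  have "card {j\<in>{1..m}. \<not> satisfied n unit_times d sigma i j} \<le> m - k" if i: "i \<in> {1..n}" for i
  proof -
    have "satisfied n unit_times d sigma i j" if "j \<in> {1..m}" "q i j = U dd j" for j dd
    proof -
      have "int (sigma j i) \<le> dd" using sigma[OF that(1)] i that(2) by blast
      moreover have "dd \<le> d i j"
        using edge[rule_format, OF i that(1)] that(2) unfolding esup_edge_iff by auto
      ultimately show ?thesis
        using sigma[OF that(1)] by (simp add: satisfied_unit_times_iff[OF _ i])
    qed
    then have "{j\<in>{1..m}. \<not> satisfied n unit_times d sigma i j}
        \<subseteq> {j\<in>{1..m}. \<nexists>dd. q i j = U dd j}"
      by blast
    then have "card {j\<in>{1..m}. \<not> satisfied n unit_times d sigma i j}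
        \<le> card {j\<in>{1..m}. \<nexists>dd. q i j = U dd j}"
      by (intro card_mono) auto
    then show ?thesis using card_unslotted_days_le[OF edge inj i] by linarith
  qed
  then have "k_equitable n m unit_times d k sigma"
    using sigma card_filter_ge_iff_card_filter_not_le[OF assms(1)]
    by (simp add: k_equitable_def is_schedule_def)
  then show ?thesis by blast
qed

lemma k_equitable_of_perfect_esup_matching:
  assumes matching: "is_matching (esup_edges n m k d) M" and "card M = n * m" "k \<le> m"
  shows "\<exists>sigma. k_equitable n m unit_times d k sigma"
proof -
  have "finite (esup_jobs n m)" by (simp add: esup_jobs_def)
  then obtain p where p_inj: "inj_on p (esup_jobs n m)"
    and p: "\<forall>x\<in>esup_jobs n m. {x, p x} \<in> M"
    using matching_partner_of_saturated_side[OF matching _ _ esup_edges_job_side]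
      card_esup_jobs assms(2) by (metis order_refl)
  have job: "V i j \<in> esup_jobs n m" if "i \<in> {1..n}" "j \<in> {1..m}" for i j
    using that by (force simp: esup_jobs_def)
  have "\<forall>i\<in>{1..n}. \<forall>j\<in>{1..m}. {V i j, p (V i j)} \<in> esup_edges n m k d"
    using p job matching by (auto simp: is_matching_def)
  moreover have "inj_on (p \<circ> (\<lambda>(i, j). V i j)) ({1..n} \<times> {1..m})"
    by (rule comp_inj_on[OF _ p_inj[unfolded esup_jobs_def]]) (auto simp: inj_on_def)
  then have "inj_on (\<lambda>(i, j). p (V i j)) ({1..n} \<times> {1..m})"
    by (simp add: comp_def case_prod_beta')
  ultimately show ?thesis
    by (rule k_equitable_of_esup_partners[OF assms(3)])
qed

lemma perfect_esup_matching_of_partners: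
  assumes edge: "\<forall>i\<in>{1..n}. \<forall>j\<in>{1..m}. {V i j, q i j} \<in> esup_edges n m k d"
    and inj: "inj_on (\<lambda>(i, j). q i j) ({1..n} \<times> {1..m})"
  shows "\<exists>M. is_matching (esup_edges n m k d) M \<and> card M = n * m"
proof -
  define A where "A = {1..n} \<times> {1..m}"
  define job where "job = (\<lambda>(i, j). V i j)"
  define partner where "partner = (\<lambda>(i, j). q i j)"
  have "inj_on job A" by (auto simp: job_def inj_on_def)
  moreover have "inj_on partner A" using inj by (simp add: A_def partner_def)
  moreover have "job ` A \<inter> partner ` A = {}"
  proof -
    have "job x \<noteq> partner y" if yA: "y \<in> A" for x y
    proof -
      obtain i j where y: "y = (i, j)" "i \<in> {1..n}" "j \<in> {1..m}" using yA by (auto simp: A_def)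
      then show ?thesis
        using edge[rule_format, OF y(2,3)] unfolding esup_edge_iff job_def partner_def
        by (cases x) auto
    qed
    then show ?thesis by blast
  qed
  moreover have "\<forall>x\<in>A. {job x, partner x} \<in> esup_edges n m k d"
    using edge by (auto simp: A_def job_def partner_def)
  ultimately have "is_matching (esup_edges n m k d) ((\<lambda>x. {job x, partner x}) ` A)"
    "card ((\<lambda>x. {job x, partner x}) ` A) = card A"
    by (rule is_matching_image_of_pairs)+
  moreover have "card A = n * m" by (simp add: A_def card_cartesian_product)
  ultimately show ?thesis by auto
qed

lemma exists_late_day_numbering:
  assumes "k_equitable n m unit_times d k sigma" "k \<le> m"
  obtains t :: "nat \<Rightarrow> nat \<Rightarrow> nat" where "\<And>i. i \<in> {1..n} \<Longrightarrow>
    inj_on (t i) {j\<in>{1..m}. \<not> satisfied n unit_times d sigma i j} \<and>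
    t i ` {j\<in>{1..m}. \<not> satisfied n unit_times d sigma i j} \<subseteq> {1..m - k}"
proof -
  have "\<exists>t :: nat \<Rightarrow> nat. inj_on t {j\<in>{1..m}. \<not> satisfied n unit_times d sigma i j} \<and>
      t ` {j\<in>{1..m}. \<not> satisfied n unit_times d sigma i j} \<subseteq> {1..m - k}"
    if i: "i \<in> {1..n}" for i
  proof -
    have "finite {j\<in>{1..m}. \<not> satisfied n unit_times d sigma i j}" by simp
    moreover have "card {j\<in>{1..m}. \<not> satisfied n unit_times d sigma i j} \<le> m - k"
      using assms i card_filter_ge_iff_card_filter_not_le[OF assms(2)]
      by (simp add: k_equitable_def)
    ultimately obtain t :: "nat \<Rightarrow> nat" where
      "inj_on t {j\<in>{1..m}. \<not> satisfied n unit_times d sigma i j}"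
      "t ` {j\<in>{1..m}. \<not> satisfied n unit_times d sigma i j} \<subseteq> {1..m - k}"
      by (rule finite_inj_on_into_atLeastAtMost)
    then show ?thesis by blast
  qed
  then show thesis using that by metis
qed

lemma perfect_esup_matching_of_k_equitable:
  assumes equitable: "k_equitable n m unit_times d k sigma" and "k \<le> m"
  shows "\<exists>M. is_matching (esup_edges n m k d) M \<and> card M = n * m"
proof -
  have bij: "bij_betw (sigma j) {1..n} {1..n}" if "j \<in> {1..m}" for j
    using equitable that by (simp add: k_equitable_def is_schedule_def)
  define late where "late i = {j\<in>{1..m}. \<not> satisfied n unit_times d sigma i j}" for i
  obtain t where t: "\<And>i. i \<in> {1..n} \<Longrightarrow> inj_on (t i) (late i) \<and> t i ` late i \<subseteq> {1..m - k}"
    using exists_late_day_numbering[OF assms] unfolding late_def by blast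
  define q where "q i j = (if satisfied n unit_times d sigma i j
    then U (int (sigma j i)) j else W i (t i j))" for i j
  have "inj_on (\<lambda>(i, j). q i j) ({1..n} \<times> {1..m})"
  proof (rule inj_onI, clarify)
    fix i j i' j' assume ij: "i \<in> {1..n}" "j \<in> {1..m}" "i' \<in> {1..n}" "j' \<in> {1..m}"
      and eq: "q i j = q i' j'"
    consider "satisfied n unit_times d sigma i j" "satisfied n unit_times d sigma i' j'"
      | "j \<in> late i" "j' \<in> late i'"
      using eq ij by (auto simp: q_def late_def split: if_splits)
    then show "i = i' \<and> j = j'"
    proof cases
      case 1
      then have "j = j'" "sigma j i = sigma j i'" using eq by (auto simp: q_def)
      moreover have "inj_on (sigma j) {1..n}" using bij ij by (auto simp: bij_betw_def)
      ultimately show ?thesis using ij by (auto simp: inj_on_eq_iff)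
    next
      case 2
      then have ii': "i = i'" and "t i j = t i j'" using eq by (auto simp: q_def late_def)
      moreover have "inj_on (t i) (late i)" using t ij by simp
      ultimately have "j = j'" using 2 by (simp add: inj_on_eq_iff)
      then show ?thesis using ii' by simp
    qed
  qed
  moreover have "{V i j, q i j} \<in> esup_edges n m k d" if ij: "i \<in> {1..n}" "j \<in> {1..m}" for i j
  proof (cases "j \<in> late i")
    case True
    then have "t i j \<in> {1..m - k}" using t[OF ij(1)] by blast
    then show ?thesis using True ij by (simp add: esup_edge_iff q_def late_def)
  next
    case False
    then have "int (sigma j i) \<le> d i j" "1 \<le> sigma j i"
      using ij satisfied_unit_times_iff[of sigma j n i d, OF bij[OF ij(2)] ij(1)]
        bij_betw_apply[OF bij[OF ij(2)] ij(1)] by (auto simp: late_def)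
    then show ?thesis using False ij by (auto simp: esup_edge_iff q_def late_def)
  qed
  ultimately show ?thesis
    using perfect_esup_matching_of_partners by blast
qed

theorem lemma1:
  fixes n m k :: nat and d :: "nat \<Rightarrow> nat \<Rightarrow> int"
  assumes "k \<le> m"
    and "\<forall>i\<in>{1..n}. \<forall>j\<in>{1..m}. d i j \<ge> 1"
  shows "(\<exists>M. is_matching (esup_edges n m k d) M \<and> card M = n * m) \<longleftrightarrow>
         (\<exists>sigma. k_equitable n m unit_times d k sigma)"
proof -
  show ?thesis
    using k_equitable_of_perfect_esup_matching[OF _ _ assms(1)]
      perfect_esup_matching_of_k_equitable[OF _ assms(1)]
    by blast
qed

end
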